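(* Let $X_1,X_2,\dots$ be a sequence of non-negative random variables converging in distribution to a random variable $X$ with $\mathbf{E} X^3=\infty$ and $0<\mathbf{E} X^2<\infty$. Assume $\mathbf{E} X_n^2<\infty$ for each $n$ and $\lim_n\mathbf{E} X_n^2=\mathbf{E} X^2$. Let $\{m_n\}$ be an integer sequence with $m_n\uparrow+\infty$ and, for every $n$, let $X_{n,1},\dots,X_{n,m_n}$ be iid copies of $X_n$. Let $S_{X,n}=\sum_{j\in[m_n]}X_{n,j}^3$. Then, as $n\to\infty$, $$m_n^{-3}\sum_{\{j,k\}\subset[m_n]}X_{n,j}^3X_{n,k}^3=o_P(S_{X,n}),\qquad m_n^{-3}\sum_{\{j,k,r\}\subset[m_n]}X_{n,j}^2X_{n,k}^2X_{n,r}^2=o_P(S_{X,n}),$$ $$m_n^{-1}\sum_{\{j,k\}\subset[m_n]}X_{n,j}^2X_{n,k}^2=o_P(S_{X,n}).$$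
   Context: $[k]=\{1,\dots,k\}$; sums over $\{j,k\}\subset[m_n]$ (resp. $\{j,k,r\}$) range over 2-element (resp. 3-element) subsets. $A_n=o_P(B_n)$ means $A_n/B_n\to0$ in probability. *)

theory Defs
  imports "HOL-Probability.Probability"
begin

definition small_o_P :: "(nat \<Rightarrow> 'a measure) \<Rightarrow> (nat \<Rightarrow> 'a \<Rightarrow> real) \<Rightarrow> (nat \<Rightarrow> 'a \<Rightarrow> real) \<Rightarrow> bool" where
  "small_o_P \<Omega> A B \<longleftrightarrow>
     (\<forall>e>0. (\<lambda>n. measure (\<Omega> n) {\<omega> \<in> space (\<Omega> n). \<bar>A n \<omega> / B n \<omega>\<bar> > e}) \<longlonglongrightarrow> 0)"

end

theory Submission
  imports Defs
begin

text \<open>Write \<open>T\<^sub>n = \<Sum>\<^sub>j X\<^sub>n\<^sub>,\<^sub>j\<^sup>2\<close> and \<open>S\<^sub>n = \<Sum>\<^sub>j X\<^sub>n\<^sub>,\<^sub>j\<^sup>3\<close>.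
  Since \<open>E X\<^sub>n\<^sup>2\<close> is bounded, Markov's inequality shows that \<open>T\<^sub>n / m\<^sub>n\<close> is bounded in
  probability. Since \<open>E X\<^sup>3 = \<infinity>\<close>, for every \<open>K\<close> some truncation \<open>min (X\<^sup>3) B\<close> has mean
  above \<open>K + 1\<close>; by weak convergence so does \<open>min (X\<^sub>n\<^sup>3) B\<close> for large \<open>n\<close>, and
  Hoeffding's inequality gives \<open>P(S\<^sub>n < K m\<^sub>n) \<rightarrow> 0\<close>: \<open>S\<^sub>n / m\<^sub>n\<close> diverges in probability.
  The three sums are elementary symmetric sums, bounded by \<open>S\<^sub>n\<^sup>2\<close>, \<open>T\<^sub>n\<^sup>3\<close> and
  \<open>T\<^sub>n\<^sup>2\<close>; together with \<open>S\<^sub>n\<^sup>2 \<le> T\<^sub>n\<^sup>3\<close> each ratio is below any \<open>\<epsilon>\<close> as soon as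
  \<open>T\<^sub>n \<le> L m\<^sub>n\<close>, \<open>S\<^sub>n \<ge> K m\<^sub>n\<close> and \<open>m\<^sub>n\<close> is large.\<close>

section \<open>Elementary symmetric sums\<close>

definition elem_sym :: "('b \<Rightarrow> 'c::comm_semiring_1) \<Rightarrow> 'b set \<Rightarrow> nat \<Rightarrow> 'c" where
  "elem_sym a I k = (\<Sum>J\<in>{J. J \<subseteq> I \<and> card J = k}. \<Prod>j\<in>J. a j)"

lemma elem_sym_0 [simp]:
  assumes "finite I"
  shows "elem_sym a I 0 = 1"
proof -
  have "{J. J \<subseteq> I \<and> card J = 0} = {{}}"
    using assms by (auto dest: finite_subset)
  then show ?thesis by (simp add: elem_sym_def)
qed

lemma elem_sym_eq_0:
  assumes "finite I" "card I < k"
  shows "elem_sym a I k = 0"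
proof -
  have "{J. J \<subseteq> I \<and> card J = k} = {}"
    using card_mono[OF assms(1)] assms(2) by (blast dest: leD)
  then show ?thesis
    unfolding elem_sym_def by (metis sum.empty)
qed

lemma subsets_card_Suc_insert:
  assumes "finite F" "x \<notin> F"
  shows "{J. J \<subseteq> insert x F \<and> card J = Suc k} =
    {J. J \<subseteq> F \<and> card J = Suc k} \<union> insert x ` {J. J \<subseteq> F \<and> card J = k}"
proof (intro equalityI subsetI)
  fix J assume J: "J \<in> {J. J \<subseteq> insert x F \<and> card J = Suc k}"
  show "J \<in> {J. J \<subseteq> F \<and> card J = Suc k} \<union> insert x ` {J. J \<subseteq> F \<and> card J = k}"
  proof (cases "x \<in> J")
    case True
    then have "J = insert x (J - {x})" "card (J - {x}) = k"
      using J assms(1) by (auto dest: finite_subset)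
    then show ?thesis using J by blast
  qed (use J in auto)
next
  fix J assume "J \<in> {J. J \<subseteq> F \<and> card J = Suc k} \<union> insert x ` {J. J \<subseteq> F \<and> card J = k}"
  then show "J \<in> {J. J \<subseteq> insert x F \<and> card J = Suc k}"
  proof
    assume "J \<in> {J. J \<subseteq> F \<and> card J = Suc k}"
    then show ?thesis
      by auto
  next
    assume "J \<in> insert x ` {J. J \<subseteq> F \<and> card J = k}"
    then obtain J' where "J' \<subseteq> F" "card J' = k" "J = insert x J'"
      by auto
    moreover have "finite J'" "x \<notin> J'"
      using \<open>J' \<subseteq> F\<close> assms by (auto dest: finite_subset)
    ultimately show ?thesis
      by (simp add: subset_insertI2)
  qed
qed

lemma elem_sym_insert_Suc:
  assumes "finite F" "x \<notin> F"
  shows "elem_sym a (insert x F) (Suc k) = elem_sym a F (Suc k) + a x * elem_sym a F k"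
proof -
  have inj: "inj_on (insert x) {J. J \<subseteq> F \<and> card J = k}"
    using assms(2) by (auto simp: inj_on_def)
  have "(\<Prod>j\<in>insert x J. a j) = a x * (\<Prod>j\<in>J. a j)" if "J \<subseteq> F" for J
    using that assms by (subst prod.insert) (auto dest: finite_subset)
  then have "(\<Sum>J\<in>insert x ` {J. J \<subseteq> F \<and> card J = k}. \<Prod>j\<in>J. a j)
      = (\<Sum>J\<in>{J. J \<subseteq> F \<and> card J = k}. a x * (\<Prod>j\<in>J. a j))"
    by (simp add: sum.reindex[OF inj])
  moreover have "elem_sym a (insert x F) (Suc k) = elem_sym a F (Suc k)
      + (\<Sum>J\<in>insert x ` {J. J \<subseteq> F \<and> card J = k}. \<Prod>j\<in>J. a j)"
    unfolding elem_sym_def subsets_card_Suc_insert[OF assms]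
    using assms by (intro sum.union_disjoint) auto
  ultimately show ?thesis
    by (simp add: elem_sym_def sum_distrib_left)
qed

lemma elem_sym_le_sum_power:
  fixes a :: "'b \<Rightarrow> 'c::linordered_semidom"
  assumes "finite I" "\<And>i. i \<in> I \<Longrightarrow> 0 \<le> a i"
  shows "elem_sym a I k \<le> (\<Sum>i\<in>I. a i) ^ k"
  using assms
proof (induction I arbitrary: k rule: finite_induct)
  case empty
  then show ?case by (cases k) (auto simp: elem_sym_eq_0)
next
  case (insert x F)
  define s where "s = (\<Sum>i\<in>F. a i)"
  have "0 \<le> s" "0 \<le> a x"
    using insert.prems by (auto simp: s_def intro: sum_nonneg)
  show ?case
  proof (cases k)
    case (Suc k')
    have "elem_sym a (insert x F) k = elem_sym a F (Suc k') + a x * elem_sym a F k'"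
      using insert.hyps Suc by (simp add: elem_sym_insert_Suc)
    also have "\<dots> \<le> s * s ^ k' + a x * s ^ k'"
      using insert.IH[of "Suc k'"] insert.IH[of k'] insert.prems \<open>0 \<le> a x\<close>
      by (auto simp: s_def intro!: add_mono mult_left_mono)
    also have "\<dots> \<le> s * (s + a x) ^ k' + a x * (s + a x) ^ k'"
      using \<open>0 \<le> s\<close> \<open>0 \<le> a x\<close> by (intro add_mono mult_left_mono power_mono) auto
    finally show ?thesis
      using insert.hyps Suc by (simp add: s_def algebra_simps)
  qed (use insert.hyps in simp)
qed

lemma sum_cubes_squared_le:
  fixes a :: "'b \<Rightarrow> real"
  assumes "finite I" "\<And>i. i \<in> I \<Longrightarrow> 0 \<le> a i"
  shows "(\<Sum>i\<in>I. a i ^ 3) ^ 2 \<le> (\<Sum>i\<in>I. a i ^ 2) ^ 3"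
proof -
  define T where "T = (\<Sum>i\<in>I. a i ^ 2)"
  have "a i \<le> sqrt T" if "i \<in> I" for i
  proof -
    have "a i ^ 2 \<le> T"
      unfolding T_def using that assms(1) by (auto intro: member_le_sum)
    then show ?thesis by (simp add: real_le_rsqrt)
  qed
  then have "a i * a i ^ 2 \<le> sqrt T * a i ^ 2" if "i \<in> I" for i
    using that by (intro mult_right_mono) auto
  then have "(\<Sum>i\<in>I. a i ^ 3) \<le> (\<Sum>i\<in>I. sqrt T * a i ^ 2)"
    by (intro sum_mono) (simp add: eval_nat_numeral)
  also have "\<dots> = sqrt T * T"
    by (simp add: T_def sum_distrib_left)
  finally have "(\<Sum>i\<in>I. a i ^ 3) ^ 2 \<le> (sqrt T * T) ^ 2"
    using assms by (intro power_mono) (auto intro: sum_nonneg)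
  also have "\<dots> = T ^ 3"
    by (simp add: T_def power_mult_distrib sum_nonneg eval_nat_numeral)
  finally show ?thesis unfolding T_def .
qed

lemma elem_sym2_cubes_ratio_le:
  fixes a :: "'b \<Rightarrow> real"
  assumes "finite I" "\<And>i. i \<in> I \<Longrightarrow> 0 \<le> a i" "0 < e" "1 \<le> M" "L ^ 3 / e\<^sup>2 \<le> M"
    and "(\<Sum>i\<in>I. a i ^ 2) \<le> L * M"
  shows "\<bar>elem_sym (\<lambda>i. a i ^ 3) I 2 / M ^ 3 / (\<Sum>i\<in>I. a i ^ 3)\<bar> \<le> e"
proof -
  define E S T where "E = elem_sym (\<lambda>i. a i ^ 3) I 2"
    and "S = (\<Sum>i\<in>I. a i ^ 3)" and "T = (\<Sum>i\<in>I. a i ^ 2)"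
  have "0 \<le> E" "0 \<le> S" "0 \<le> T"
    using assms(2) by (auto simp: E_def S_def T_def elem_sym_def intro!: sum_nonneg prod_nonneg)
  have "E \<le> S\<^sup>2"
    unfolding E_def S_def using assms(1,2) by (intro elem_sym_le_sum_power) auto
  have "S\<^sup>2 \<le> T ^ 3"
    unfolding S_def T_def using assms(1,2) by (rule sum_cubes_squared_le)
  also have "\<dots> \<le> (L * M) ^ 3"
    using \<open>0 \<le> T\<close> assms(6) by (intro power_mono) (simp_all add: T_def)
  also have "\<dots> = L ^ 3 * M ^ 3"
    by (simp add: power_mult_distrib)
  also have "\<dots> \<le> (e\<^sup>2 * M) * M ^ 3"
    using assms(3-5) by (intro mult_right_mono) (simp_all add: pos_divide_le_eq mult.commute)
  also have "\<dots> \<le> (e\<^sup>2 * M ^ 3) * M ^ 3"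
    using power_increasing[of 1 3 M] assms(4) by (intro mult_right_mono mult_left_mono) simp_all
  also have "\<dots> = (e * M ^ 3)\<^sup>2"
    by (simp add: power_mult_distrib power2_eq_square)
  finally have "S \<le> e * M ^ 3"
    by (rule power2_le_imp_le) (use assms(3,4) in simp)
  have "E \<le> S * S"
    using \<open>E \<le> S\<^sup>2\<close> by (simp add: power2_eq_square)
  also have "\<dots> \<le> S * (e * M ^ 3)"
    using \<open>S \<le> e * M ^ 3\<close> \<open>0 \<le> S\<close> by (rule mult_left_mono)
  finally have "E \<le> e * (M ^ 3 * S)"
    by (simp only: ac_simps)
  show ?thesis
    unfolding E_def[symmetric] S_def[symmetric]
  proof (cases "S = 0")
    case False
    then have "0 < M ^ 3 * S"
      using \<open>0 \<le> S\<close> assms(4) by simp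
    then show "\<bar>E / M ^ 3 / S\<bar> \<le> e"
      using \<open>E \<le> e * (M ^ 3 * S)\<close> \<open>0 \<le> E\<close> by (simp add: pos_divide_le_eq)
  qed (use assms(3) in simp)
qed

lemma elem_sym3_squares_ratio_le:
  fixes a :: "'b \<Rightarrow> real"
  assumes "finite I" "\<And>i. i \<in> I \<Longrightarrow> 0 \<le> a i" "0 < e" "0 < L" "1 \<le> M"
    and "(\<Sum>i\<in>I. a i ^ 2) \<le> L * M" "L ^ 3 / e * M \<le> (\<Sum>i\<in>I. a i ^ 3)"
  shows "\<bar>elem_sym (\<lambda>i. a i ^ 2) I 3 / M ^ 3 / (\<Sum>i\<in>I. a i ^ 3)\<bar> \<le> e"
proof -
  define E S T where "E = elem_sym (\<lambda>i. a i ^ 2) I 3"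
    and "S = (\<Sum>i\<in>I. a i ^ 3)" and "T = (\<Sum>i\<in>I. a i ^ 2)"
  have "0 \<le> E" "0 \<le> T"
    using assms(2) by (auto simp: E_def T_def elem_sym_def intro!: sum_nonneg prod_nonneg)
  have "E \<le> T ^ 3"
    unfolding E_def T_def using assms(1,2) by (intro elem_sym_le_sum_power) auto
  also have "\<dots> \<le> (L * M) ^ 3"
    using \<open>0 \<le> T\<close> assms(6) by (intro power_mono) (simp_all add: T_def)
  also have "\<dots> = e * M ^ 3 * (L ^ 3 / e)"
    using assms(3) by (simp add: power_mult_distrib)
  also have "\<dots> \<le> e * M ^ 3 * (L ^ 3 / e * M)"
    using assms(3-5) mult_left_mono[of 1 M "L ^ 3 / e"] by (intro mult_left_mono) simp_all
  also have "\<dots> \<le> e * M ^ 3 * S"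
    using assms(3,5,7) by (intro mult_left_mono) (simp_all add: S_def)
  finally have "E \<le> e * (M ^ 3 * S)"
    by (simp add: mult.assoc)
  have "0 < L ^ 3 / e * M"
    using assms(3-5) by simp
  then have "0 < S"
    unfolding S_def using assms(7) by (rule less_le_trans)
  then show ?thesis
    using \<open>E \<le> e * (M ^ 3 * S)\<close> \<open>0 \<le> E\<close> assms(5)
    by (simp add: S_def E_def pos_divide_le_eq)
qed

lemma elem_sym2_squares_ratio_le:
  fixes a :: "'b \<Rightarrow> real"
  assumes "finite I" "\<And>i. i \<in> I \<Longrightarrow> 0 \<le> a i" "0 < e" "0 < L" "1 \<le> M"
    and "(\<Sum>i\<in>I. a i ^ 2) \<le> L * M" "L\<^sup>2 / e * M \<le> (\<Sum>i\<in>I. a i ^ 3)"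
  shows "\<bar>elem_sym (\<lambda>i. a i ^ 2) I 2 / M / (\<Sum>i\<in>I. a i ^ 3)\<bar> \<le> e"
proof -
  define E S T where "E = elem_sym (\<lambda>i. a i ^ 2) I 2"
    and "S = (\<Sum>i\<in>I. a i ^ 3)" and "T = (\<Sum>i\<in>I. a i ^ 2)"
  have "0 \<le> E" "0 \<le> T"
    using assms(2) by (auto simp: E_def T_def elem_sym_def intro!: sum_nonneg prod_nonneg)
  have "E \<le> T\<^sup>2"
    unfolding E_def T_def using assms(1,2) by (intro elem_sym_le_sum_power) auto
  also have "\<dots> \<le> (L * M)\<^sup>2"
    using \<open>0 \<le> T\<close> assms(6) by (intro power_mono) (simp_all add: T_def)
  also have "\<dots> = e * M * (L\<^sup>2 / e * M)"
    using assms(3) by (simp add: power2_eq_square)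
  also have "\<dots> \<le> e * M * S"
    using assms(3,5,7) by (intro mult_left_mono) (simp_all add: S_def)
  finally have "E \<le> e * (M * S)"
    by (simp add: mult.assoc)
  have "0 < L\<^sup>2 / e * M"
    using assms(3-5) by simp
  then have "0 < S"
    unfolding S_def using assms(7) by (rule less_le_trans)
  then show ?thesis
    using \<open>E \<le> e * (M * S)\<close> \<open>0 \<le> E\<close> assms(5)
    by (simp add: S_def E_def pos_divide_le_eq)
qed

section \<open>Boundedness and divergence in probability\<close>

definition bounded_in_prob :: "(nat \<Rightarrow> 'a measure) \<Rightarrow> (nat \<Rightarrow> 'a \<Rightarrow> real) \<Rightarrow> bool" where
  "bounded_in_prob \<Omega> X \<longleftrightarrow>
     (\<forall>r>0. \<exists>L. \<forall>\<^sub>F n in sequentially. measure (\<Omega> n) {\<omega> \<in> space (\<Omega> n). L < \<bar>X n \<omega>\<bar>} \<le> r)"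

definition diverges_in_prob :: "(nat \<Rightarrow> 'a measure) \<Rightarrow> (nat \<Rightarrow> 'a \<Rightarrow> real) \<Rightarrow> bool" where
  "diverges_in_prob \<Omega> X \<longleftrightarrow>
     (\<forall>K. (\<lambda>n. measure (\<Omega> n) {\<omega> \<in> space (\<Omega> n). X n \<omega> < K}) \<longlonglongrightarrow> 0)"

lemma small_o_P_of_bounded_diverges:
  fixes \<Omega> :: "nat \<Rightarrow> 'a measure" and X Z A B :: "nat \<Rightarrow> 'a \<Rightarrow> real"
  assumes prob: "\<And>n. prob_space (\<Omega> n)"
    and [measurable]: "\<And>n. X n \<in> borel_measurable (\<Omega> n)" "\<And>n. Z n \<in> borel_measurable (\<Omega> n)"
    and bounded: "bounded_in_prob \<Omega> X" and diverges: "diverges_in_prob \<Omega> Z"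
    and cover: "\<And>e L. 0 < e \<Longrightarrow> 0 < L \<Longrightarrow> \<exists>K. \<forall>\<^sub>F n in sequentially. AE \<omega> in \<Omega> n.
                  \<bar>X n \<omega>\<bar> \<le> L \<longrightarrow> K \<le> Z n \<omega> \<longrightarrow> \<bar>A n \<omega> / B n \<omega>\<bar> \<le> e"
  shows "small_o_P \<Omega> A B"
  unfolding small_o_P_def
proof (intro allI impI LIMSEQ_I)
  fix e r :: real
  assume "0 < e" "0 < r"
  obtain L0 where L0: "\<forall>\<^sub>F n in sequentially. measure (\<Omega> n) {\<omega> \<in> space (\<Omega> n). L0 < \<bar>X n \<omega>\<bar>} \<le> r / 2"
    using bounded \<open>0 < r\<close> unfolding bounded_in_prob_def by (meson half_gt_zero)
  have "0 < max L0 1" by simp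
  then obtain K where K: "\<forall>\<^sub>F n in sequentially. AE \<omega> in \<Omega> n.
      \<bar>X n \<omega>\<bar> \<le> max L0 1 \<longrightarrow> K \<le> Z n \<omega> \<longrightarrow> \<bar>A n \<omega> / B n \<omega>\<bar> \<le> e"
    using cover[OF \<open>0 < e\<close>] by blast
  have "(\<lambda>n. measure (\<Omega> n) {\<omega> \<in> space (\<Omega> n). Z n \<omega> < K}) \<longlonglongrightarrow> 0"
    using diverges unfolding diverges_in_prob_def by blast
  then have "\<forall>\<^sub>F n in sequentially. measure (\<Omega> n) {\<omega> \<in> space (\<Omega> n). Z n \<omega> < K} < r / 2"
    by (rule order_tendstoD(2)) (use \<open>0 < r\<close> in simp)
  with L0 K have "\<forall>\<^sub>F n in sequentially. measure (\<Omega> n) {\<omega> \<in> space (\<Omega> n). e < \<bar>A n \<omega> / B n \<omega>\<bar>} < r"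
  proof eventually_elim
    case (elim n)
    interpret prob_space "\<Omega> n" by (rule prob)
    have "measure (\<Omega> n) {\<omega> \<in> space (\<Omega> n). e < \<bar>A n \<omega> / B n \<omega>\<bar>}
        \<le> measure (\<Omega> n) ({\<omega> \<in> space (\<Omega> n). L0 < \<bar>X n \<omega>\<bar>} \<union> {\<omega> \<in> space (\<Omega> n). Z n \<omega> < K})"
      using elim(2) by (intro finite_measure_mono_AE) (auto elim!: eventually_mono)
    also have "\<dots> \<le> measure (\<Omega> n) {\<omega> \<in> space (\<Omega> n). L0 < \<bar>X n \<omega>\<bar>}
                    + measure (\<Omega> n) {\<omega> \<in> space (\<Omega> n). Z n \<omega> < K}"
      by (intro measure_Un_le) measurable
    finally show ?case
      using elim(1,3) by linarith
  qed
  then show "\<exists>N. \<forall>n\<ge>N. norm (measure (\<Omega> n) {\<omega> \<in> space (\<Omega> n). e < \<bar>A n \<omega> / B n \<omega>\<bar>} - 0) < r"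
    by (simp add: eventually_sequentially)
qed

lemma truncated_integral_unbounded:
  fixes f :: "'b \<Rightarrow> real"
  assumes "finite_measure M" and [measurable]: "f \<in> borel_measurable M"
    and "(\<integral>\<^sup>+ x. ennreal (f x) \<partial>M) = \<infinity>"
  shows "\<exists>B>0. C < (\<integral>x. min (max (f x) 0) B \<partial>M)"
proof -
  interpret finite_measure M by (rule assms(1))
  define g where "g k x = ennreal (min (max (f x) 0) (real (Suc k)))" for k x
  have [measurable]: "g k \<in> borel_measurable M" for k
    unfolding g_def by measurable
  have "incseq g"
    by (auto simp: incseq_def le_fun_def g_def intro!: ennreal_leI)
  moreover have "(\<lambda>k. g k x) \<longlonglongrightarrow> ennreal (f x)" for x
  proof (rule tendsto_eventually)
    obtain k0 :: nat where "max (f x) 0 \<le> real k0"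
      using real_arch_simple by blast
    then show "\<forall>\<^sub>F k in sequentially. g k x = ennreal (f x)"
      by (auto simp: g_def eventually_sequentially intro!: exI[of _ k0])
  qed
  ultimately have "(\<lambda>k. integral\<^sup>N M (g k)) \<longlonglongrightarrow> \<infinity>"
    using nn_integral_LIMSEQ[of g M "\<lambda>x. ennreal (f x)"] assms(3) by simp
  then have "\<forall>\<^sub>F k in sequentially. ennreal (max C 0) < integral\<^sup>N M (g k)"
    by (rule order_tendstoD(1)) simp
  then obtain k where "ennreal (max C 0) < integral\<^sup>N M (g k)"
    unfolding eventually_sequentially by blast
  also have "integral\<^sup>N M (g k) = ennreal (\<integral>x. min (max (f x) 0) (real (Suc k)) \<partial>M)"
    unfolding g_def
    by (intro nn_integral_eq_integral integrable_const_bound[where B = "real (Suc k)"]) auto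
  finally have "max C 0 < (\<integral>x. min (max (f x) 0) (real (Suc k)) \<partial>M)"
    by (rule ennreal_less_iff[THEN iffD1, rotated]) simp
  then show ?thesis
    by (intro exI[of _ "real (Suc k)"]) simp
qed

section \<open>Triangular arrays of iid random variables\<close>

locale iid_array =
  fixes \<Omega> :: "nat \<Rightarrow> 'a measure" and m :: "nat \<Rightarrow> nat" and Y :: "nat \<Rightarrow> nat \<Rightarrow> 'a \<Rightarrow> real"
    and \<mu> :: "nat \<Rightarrow> real measure"
  assumes prob_space: "\<And>n. prob_space (\<Omega> n)"
    and indep: "\<And>n. prob_space.indep_vars (\<Omega> n) (\<lambda>_. borel) (Y n) {1..m n}"
    and distr_Y: "\<And>n j. j \<in> {1..m n} \<Longrightarrow> distr (\<Omega> n) borel (Y n j) = \<mu> n"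
begin

lemma measurable_Y: "j \<in> {1..m n} \<Longrightarrow> Y n j \<in> borel_measurable (\<Omega> n)"
  using indep[of n] unfolding prob_space.indep_vars_def[OF prob_space] by blast

lemma borel_measurable_sum_comp [measurable]:
  fixes f :: "real \<Rightarrow> real"
  assumes "f \<in> borel_measurable borel"
  shows "(\<lambda>\<omega>. \<Sum>j\<in>{1..m n}. f (Y n j \<omega>)) \<in> borel_measurable (\<Omega> n)"
proof (rule borel_measurable_sum)
  fix j assume "j \<in> {1..m n}"
  show "(\<lambda>\<omega>. f (Y n j \<omega>)) \<in> borel_measurable (\<Omega> n)"
    by (rule measurable_compose[OF measurable_Y[OF \<open>j \<in> {1..m n}\<close>] assms])
qed

lemma AE_all_comp:
  assumes "AE x in \<mu> n. P x" and "{x. P x} \<in> sets borel"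
  shows "AE \<omega> in \<Omega> n. \<forall>j\<in>{1..m n}. P (Y n j \<omega>)"
proof (rule AE_finite_allI)
  fix j assume j: "j \<in> {1..m n}"
  have "AE x in distr (\<Omega> n) borel (Y n j). P x"
    by (subst distr_Y[OF j]) (rule assms(1))
  then show "AE \<omega> in \<Omega> n. P (Y n j \<omega>)"
    using measurable_Y[OF j] assms(2) by (subst (asm) AE_distr_iff) auto
qed simp

lemma integrable_comp:
  fixes f :: "real \<Rightarrow> real"
  assumes "j \<in> {1..m n}" "f \<in> borel_measurable borel" "integrable (\<mu> n) f"
  shows "integrable (\<Omega> n) (\<lambda>\<omega>. f (Y n j \<omega>))"
  using assms integrable_distr_eq[OF measurable_Y[OF assms(1)] assms(2)] distr_Y by simp

lemma integral_comp:
  fixes f :: "real \<Rightarrow> real"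
  assumes "j \<in> {1..m n}" "f \<in> borel_measurable borel"
  shows "(\<integral>\<omega>. f (Y n j \<omega>) \<partial>\<Omega> n) = (\<integral>x. f x \<partial>\<mu> n)"
  using integral_distr[OF measurable_Y[OF assms(1)] assms(2)] distr_Y[OF assms(1)] by simp

lemma bounded_in_prob_mean:
  fixes f :: "real \<Rightarrow> real"
  assumes [measurable]: "f \<in> borel_measurable borel" and "\<And>x. 0 \<le> f x"
    and "\<And>n. integrable (\<mu> n) f" and "Bseq (\<lambda>n. \<integral>x. f x \<partial>\<mu> n)"
  shows "bounded_in_prob \<Omega> (\<lambda>n \<omega>. (\<Sum>j\<in>{1..m n}. f (Y n j \<omega>)) / m n)"
proof -
  obtain C where "0 < C" and C: "\<And>n. \<bar>\<integral>x. f x \<partial>\<mu> n\<bar> \<le> C"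
    using assms(4) unfolding Bseq_def by auto
  have "measure (\<Omega> n) {\<omega> \<in> space (\<Omega> n). C / r < \<bar>(\<Sum>j\<in>{1..m n}. f (Y n j \<omega>)) / m n\<bar>} \<le> r"
    if "0 < r" for r n
  proof -
    interpret prob_space "\<Omega> n" by (rule prob_space)
    define X where "X \<omega> = (\<Sum>j\<in>{1..m n}. f (Y n j \<omega>)) / m n" for \<omega>
    have [measurable]: "X \<in> borel_measurable (\<Omega> n)"
      unfolding X_def by measurable
    have "0 \<le> X \<omega>" for \<omega>
      using assms(2) by (simp add: X_def sum_nonneg)
    have "integrable (\<Omega> n) (\<lambda>\<omega>. \<Sum>j\<in>{1..m n}. f (Y n j \<omega>))"
      using assms(1,3) by (auto intro!: integrable_comp)
    then have "integrable (\<Omega> n) X"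
      unfolding X_def by simp
    have "expectation X = m n * (\<integral>x. f x \<partial>\<mu> n) / m n"
      unfolding X_def using assms by (simp add: integral_comp integrable_comp)
    also have "\<dots> \<le> C"
      using C[of n] by (cases "m n = 0") auto
    finally have "expectation X \<le> C" .
    have "{\<omega> \<in> space (\<Omega> n). C / r < \<bar>X \<omega>\<bar>} \<subseteq> {\<omega> \<in> space (\<Omega> n). C / r \<le> X \<omega>}"
      using \<open>\<And>\<omega>. 0 \<le> X \<omega>\<close> by auto
    then have "measure (\<Omega> n) {\<omega> \<in> space (\<Omega> n). C / r < \<bar>X \<omega>\<bar>}
        \<le> measure (\<Omega> n) {\<omega> \<in> space (\<Omega> n). C / r \<le> X \<omega>}"
      by (rule finite_measure_mono) measurable
    also have "\<dots> \<le> expectation X / (C / r)"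
      using \<open>integrable (\<Omega> n) X\<close> \<open>0 < C\<close> \<open>0 < r\<close> \<open>\<And>\<omega>. 0 \<le> X \<omega>\<close>
      by (intro integral_Markov_inequality_measure[where A = "space (\<Omega> n)"]) auto
    also have "\<dots> \<le> r"
      using \<open>expectation X \<le> C\<close> \<open>0 < C\<close> \<open>0 < r\<close> by (simp add: field_simps)
    finally show ?thesis
      by (simp add: X_def)
  qed
  then show ?thesis
    unfolding bounded_in_prob_def by (blast intro: always_eventually)
qed

lemma Hoeffding_sum_le:
  fixes g :: "real \<Rightarrow> real" and B t :: real
  assumes [measurable]: "g \<in> borel_measurable borel" and "\<And>x. g x \<in> {0..B}"
    and "0 < B" "0 < m n" "0 \<le> t"
  shows "measure (\<Omega> n) {\<omega> \<in> space (\<Omega> n). (\<Sum>j\<in>{1..m n}. g (Y n j \<omega>)) \<le> m n * (\<integral>x. g x \<partial>\<mu> n) - t}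
           \<le> exp (- 2 * t\<^sup>2 / (m n * B\<^sup>2))"
proof -
  interpret prob_space "\<Omega> n" by (rule prob_space)
  interpret Hoeffding_ineq "\<Omega> n" "{1..m n}" "\<lambda>j \<omega>. g (Y n j \<omega>)" "\<lambda>_. 0" "\<lambda>_. B"
    "m n * (\<integral>x. g x \<partial>\<mu> n)"
  proof unfold_locales
    show "indep_vars (\<lambda>_. borel) (\<lambda>j \<omega>. g (Y n j \<omega>)) {1..m n}"
      by (rule indep_vars_compose2[OF indep]) auto
    show "m n * (\<integral>x. g x \<partial>\<mu> n) \<equiv> (\<Sum>j\<in>{1..m n}. expectation (\<lambda>\<omega>. g (Y n j \<omega>)))"
      by (simp add: integral_comp)
  qed (use assms(2) in auto)
  show ?thesis
    using Hoeffding_ineq_le[OF \<open>0 \<le> t\<close>] assms(3,4) by simp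
qed

lemma diverges_in_prob_mean:
  fixes \<nu> :: "real measure" and f :: "real \<Rightarrow> real"
  assumes "\<And>n. real_distribution (\<mu> n)" "real_distribution \<nu>" "weak_conv_m \<mu> \<nu>"
    and "\<And>x. isCont f x" "\<And>n. AE x in \<mu> n. 0 \<le> f x" "(\<integral>\<^sup>+ x. ennreal (f x) \<partial>\<nu>) = \<infinity>"
    and "filterlim m at_top sequentially"
  shows "diverges_in_prob \<Omega> (\<lambda>n \<omega>. (\<Sum>j\<in>{1..m n}. f (Y n j \<omega>)) / m n)"
  unfolding diverges_in_prob_def
proof
  fix K :: real
  have [measurable]: "f \<in> borel_measurable borel"
    using assms(4) by (intro borel_measurable_continuous_onI continuous_at_imp_continuous_on ballI)
  interpret \<nu>: real_distribution \<nu> by (rule assms(2))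
  have "f \<in> borel_measurable \<nu>"
    by measurable
  then obtain B where "0 < B" and B: "K + 1 < (\<integral>x. min (max (f x) 0) B \<partial>\<nu>)"
    using truncated_integral_unbounded[OF \<nu>.finite_measure_axioms _ assms(6)] by blast
  define g where "g x = min (max (f x) 0) B" for x
  have g: "g x \<in> {0..B}" for x
    using \<open>0 < B\<close> by (simp add: g_def)
  have [measurable]: "g \<in> borel_measurable borel"
    unfolding g_def by measurable
  have "isCont g x" for x
    unfolding g_def using assms(4) by (intro continuous_intros)
  moreover have "norm (g x) \<le> B" for x
    using g[of x] by simp
  ultimately have "(\<lambda>n. \<integral>x. g x \<partial>\<mu> n) \<longlonglongrightarrow> (\<integral>x. g x \<partial>\<nu>)"
    by (rule weak_conv_imp_integral_bdd_continuous_conv[OF assms(1-3)])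
  then have "\<forall>\<^sub>F n in sequentially. K + 1 < (\<integral>x. g x \<partial>\<mu> n)"
    using B unfolding g_def by (rule order_tendstoD(1))
  moreover have "\<forall>\<^sub>F n in sequentially. 0 < m n"
    using assms(7)[unfolded filterlim_at_top, rule_format, of 1] by eventually_elim simp
  ultimately have upper: "\<forall>\<^sub>F n in sequentially.
      measure (\<Omega> n) {\<omega> \<in> space (\<Omega> n). (\<Sum>j\<in>{1..m n}. f (Y n j \<omega>)) / m n < K} \<le> exp (- 2 * real (m n) / B\<^sup>2)"
  proof eventually_elim
    case (elim n)
    note mean_large = elim(1) and m_pos = elim(2)
    interpret prob_space "\<Omega> n" by (rule prob_space)
    have "AE \<omega> in \<Omega> n. \<forall>j\<in>{1..m n}. 0 \<le> f (Y n j \<omega>)"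
      using assms(5) by (intro AE_all_comp) auto
    then have "AE \<omega> in \<Omega> n. (\<Sum>j\<in>{1..m n}. f (Y n j \<omega>)) / m n < K \<longrightarrow>
        (\<Sum>j\<in>{1..m n}. g (Y n j \<omega>)) \<le> m n * (\<integral>x. g x \<partial>\<mu> n) - m n"
    proof eventually_elim
      case (elim \<omega>)
      have "(\<Sum>j\<in>{1..m n}. g (Y n j \<omega>)) \<le> (\<Sum>j\<in>{1..m n}. f (Y n j \<omega>))"
        using elim by (intro sum_mono) (auto simp: g_def)
      moreover have "m n * (K + 1) \<le> m n * (\<integral>x. g x \<partial>\<mu> n)"
        using mean_large by (intro mult_left_mono) auto
      ultimately show ?case
        using m_pos by (simp add: divide_less_eq algebra_simps)
    qed
    moreover have "{\<omega> \<in> space (\<Omega> n). (\<Sum>j\<in>{1..m n}. g (Y n j \<omega>)) \<le> m n * (\<integral>x. g x \<partial>\<mu> n) - m n} \<in> events"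
      by measurable
    ultimately have "measure (\<Omega> n) {\<omega> \<in> space (\<Omega> n). (\<Sum>j\<in>{1..m n}. f (Y n j \<omega>)) / m n < K}
        \<le> measure (\<Omega> n) {\<omega> \<in> space (\<Omega> n). (\<Sum>j\<in>{1..m n}. g (Y n j \<omega>)) \<le> m n * (\<integral>x. g x \<partial>\<mu> n) - m n}"
      by (intro finite_measure_mono_AE) (auto elim!: eventually_mono)
    also have "\<dots> \<le> exp (- 2 * (real (m n))\<^sup>2 / (m n * B\<^sup>2))"
      using g \<open>0 < B\<close> m_pos by (intro Hoeffding_sum_le) simp_all
    also have "\<dots> = exp (- 2 * real (m n) / B\<^sup>2)"
      using m_pos by (simp add: power2_eq_square)
    finally show ?case .
  qed
  have exp_lim: "(\<lambda>n. exp (- 2 * real (m n) / B\<^sup>2)) \<longlonglongrightarrow> 0"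
  proof -
    have "((\<lambda>x. exp (- 2 * x / B\<^sup>2)) \<longlongrightarrow> 0) at_top"
      using \<open>0 < B\<close> by real_asymp
    then show ?thesis
      by (rule filterlim_compose[OF _ filterlim_compose[OF filterlim_real_sequentially assms(7)]])
  qed
  show "(\<lambda>n. measure (\<Omega> n) {\<omega> \<in> space (\<Omega> n). (\<Sum>j\<in>{1..m n}. f (Y n j \<omega>)) / m n < K}) \<longlonglongrightarrow> 0"
    by (rule tendsto_sandwich[OF _ upper tendsto_const exp_lim]) simp
qed

text \<open>With high probability \<open>\<Sum>\<^sub>j Y\<^sub>n\<^sub>j\<^sup>2 \<le> L m\<^sub>n\<close> and \<open>\<Sum>\<^sub>j Y\<^sub>n\<^sub>j\<^sup>3 \<ge> K m\<^sub>n\<close>, so a ratio that is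
  small under these two bounds (hypothesis \<open>G\<close>) is \<open>o\<^sub>P\<close> of \<open>\<Sum>\<^sub>j Y\<^sub>n\<^sub>j\<^sup>3\<close>.\<close>

lemma small_o_P_sum_cubes:
  fixes \<nu> :: "real measure" and G :: "nat set \<Rightarrow> (nat \<Rightarrow> real) \<Rightarrow> real \<Rightarrow> real"
    and K N :: "real \<Rightarrow> real \<Rightarrow> real"
  assumes "\<And>n. real_distribution (\<mu> n)" "real_distribution \<nu>" "weak_conv_m \<mu> \<nu>"
    and nonneg: "\<And>n. AE x in \<mu> n. 0 \<le> x"
    and "(\<integral>\<^sup>+ x. ennreal (x ^ 3) \<partial>\<nu>) = \<infinity>"
    and "\<And>n. integrable (\<mu> n) (\<lambda>x. x\<^sup>2)" "Bseq (\<lambda>n. \<integral>x. x\<^sup>2 \<partial>\<mu> n)"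
    and m_lim: "filterlim m at_top sequentially"
    and G: "\<And>e L I a M. finite I \<Longrightarrow> (\<And>i. i \<in> I \<Longrightarrow> 0 \<le> a i) \<Longrightarrow> 0 < e \<Longrightarrow> 0 < L \<Longrightarrow>
              1 \<le> M \<Longrightarrow> N e L \<le> M \<Longrightarrow> (\<Sum>i\<in>I. a i ^ 2) \<le> L * M \<Longrightarrow>
              K e L * M \<le> (\<Sum>i\<in>I. a i ^ 3) \<Longrightarrow> \<bar>G I a M / (\<Sum>i\<in>I. a i ^ 3)\<bar> \<le> e"
  shows "small_o_P \<Omega> (\<lambda>n \<omega>. G {1..m n} (\<lambda>j. Y n j \<omega>) (m n)) (\<lambda>n \<omega>. \<Sum>j\<in>{1..m n}. Y n j \<omega> ^ 3)"
proof (rule small_o_P_of_bounded_diverges[OF prob_space _ _ bounded_in_prob_mean diverges_in_prob_mean])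
  show "(\<lambda>\<omega>. (\<Sum>j\<in>{1..m n}. Y n j \<omega> ^ 2) / m n) \<in> borel_measurable (\<Omega> n)"
    and "(\<lambda>\<omega>. (\<Sum>j\<in>{1..m n}. Y n j \<omega> ^ 3) / m n) \<in> borel_measurable (\<Omega> n)" for n
    by measurable
  show "AE x in \<mu> n. 0 \<le> x ^ 3" for n
    using nonneg[of n] by eventually_elim simp
next
  fix e L :: real
  assume "0 < e" "0 < L"
  have "\<forall>\<^sub>F n in sequentially. max (N e L) 1 \<le> real (m n)"
    using filterlim_compose[OF filterlim_real_sequentially m_lim] unfolding filterlim_at_top by blast
  then have "\<forall>\<^sub>F n in sequentially. AE \<omega> in \<Omega> n.
      \<bar>(\<Sum>j\<in>{1..m n}. Y n j \<omega> ^ 2) / m n\<bar> \<le> L \<longrightarrow> K e L \<le> (\<Sum>j\<in>{1..m n}. Y n j \<omega> ^ 3) / m n \<longrightarrow>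
      \<bar>G {1..m n} (\<lambda>j. Y n j \<omega>) (m n) / (\<Sum>j\<in>{1..m n}. Y n j \<omega> ^ 3)\<bar> \<le> e"
  proof eventually_elim
    case (elim n)
    then have "1 \<le> real (m n)" "N e L \<le> real (m n)"
      by simp_all
    have "AE \<omega> in \<Omega> n. \<forall>j\<in>{1..m n}. 0 \<le> Y n j \<omega>"
      using nonneg by (rule AE_all_comp) simp
    then show ?case
    proof eventually_elim
      case (elim \<omega>)
      show ?case
      proof (intro impI)
        assume "\<bar>(\<Sum>j\<in>{1..m n}. Y n j \<omega> ^ 2) / m n\<bar> \<le> L" "K e L \<le> (\<Sum>j\<in>{1..m n}. Y n j \<omega> ^ 3) / m n"
        then have "(\<Sum>j\<in>{1..m n}. Y n j \<omega> ^ 2) \<le> L * m n" "K e L * m n \<le> (\<Sum>j\<in>{1..m n}. Y n j \<omega> ^ 3)"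
          using \<open>1 \<le> real (m n)\<close> by (simp_all add: pos_divide_le_eq pos_le_divide_eq)
        then show "\<bar>G {1..m n} (\<lambda>j. Y n j \<omega>) (m n) / (\<Sum>j\<in>{1..m n}. Y n j \<omega> ^ 3)\<bar> \<le> e"
          using elim \<open>0 < e\<close> \<open>0 < L\<close> \<open>1 \<le> real (m n)\<close> \<open>N e L \<le> real (m n)\<close>
          by (intro G) simp_all
      qed
    qed
  qed
  then show "\<exists>K. \<forall>\<^sub>F n in sequentially. AE \<omega> in \<Omega> n.
      \<bar>(\<Sum>j\<in>{1..m n}. Y n j \<omega> ^ 2) / m n\<bar> \<le> L \<longrightarrow> K \<le> (\<Sum>j\<in>{1..m n}. Y n j \<omega> ^ 3) / m n \<longrightarrow>
      \<bar>G {1..m n} (\<lambda>j. Y n j \<omega>) (m n) / (\<Sum>j\<in>{1..m n}. Y n j \<omega> ^ 3)\<bar> \<le> e"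
    by blast
qed (use assms in simp_all)

end

theorem lemma4:
  fixes \<mu> :: "nat \<Rightarrow> real measure"   \<comment> \<open>law of X_n\<close>
    and \<nu> :: "real measure"               \<comment> \<open>law of X\<close>
    and m :: "nat \<Rightarrow> nat"
    and \<Omega> :: "nat \<Rightarrow> 'a measure"
    and Y :: "nat \<Rightarrow> nat \<Rightarrow> 'a \<Rightarrow> real"   \<comment> \<open>Y n j = X_{n,j}\<close>
  assumes distr_mu: "\<And>n. real_distribution (\<mu> n)"
    and distr_nu: "real_distribution \<nu>"
    and nonneg: "\<And>n. AE x in \<mu> n. 0 \<le> x"
    and conv: "weak_conv_m \<mu> \<nu>"
    and third_inf: "(\<integral>\<^sup>+ x. ennreal (x ^ 3) \<partial>\<nu>) = \<infinity>"
    and second_int: "integrable \<nu> (\<lambda>x. x ^ 2)"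
    and second_pos: "0 < (\<integral>x. x ^ 2 \<partial>\<nu>)"
    and second_int_n: "\<And>n. integrable (\<mu> n) (\<lambda>x. x ^ 2)"
    and second_lim: "(\<lambda>n. \<integral>x. x ^ 2 \<partial>\<mu> n) \<longlonglongrightarrow> (\<integral>x. x ^ 2 \<partial>\<nu>)"
    and m_mono: "mono m"
    and m_lim: "filterlim m at_top sequentially"
    and prob: "\<And>n. prob_space (\<Omega> n)"
    and indep: "\<And>n. prob_space.indep_vars (\<Omega> n) (\<lambda>_. borel) (Y n) {1..m n}"
    and ident: "\<And>n j. j \<in> {1..m n} \<Longrightarrow> distr (\<Omega> n) borel (Y n j) = \<mu> n"
  shows
    "small_o_P \<Omega>
       (\<lambda>n \<omega>. (\<Sum>J\<in>{J. J \<subseteq> {1..m n} \<and> card J = 2}. \<Prod>j\<in>J. Y n j \<omega> ^ 3) / real (m n) ^ 3)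
       (\<lambda>n \<omega>. \<Sum>j\<in>{1..m n}. Y n j \<omega> ^ 3)
     \<and> small_o_P \<Omega>
       (\<lambda>n \<omega>. (\<Sum>J\<in>{J. J \<subseteq> {1..m n} \<and> card J = 3}. \<Prod>j\<in>J. Y n j \<omega> ^ 2) / real (m n) ^ 3)
       (\<lambda>n \<omega>. \<Sum>j\<in>{1..m n}. Y n j \<omega> ^ 3)
     \<and> small_o_P \<Omega>
       (\<lambda>n \<omega>. (\<Sum>J\<in>{J. J \<subseteq> {1..m n} \<and> card J = 2}. \<Prod>j\<in>J. Y n j \<omega> ^ 2) / real (m n))
       (\<lambda>n \<omega>. \<Sum>j\<in>{1..m n}. Y n j \<omega> ^ 3)"
proof -
  interpret iid_array \<Omega> m Y \<mu>
    by (rule iid_array.intro[OF prob indep ident])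
  have "Bseq (\<lambda>n. \<integral>x. x ^ 2 \<partial>\<mu> n)"
    using second_lim by (intro convergent_imp_Bseq convergentI)
  note small_o_P_ratio =
    small_o_P_sum_cubes[OF distr_mu distr_nu conv nonneg third_inf second_int_n this m_lim]
  show ?thesis
    unfolding elem_sym_def[symmetric]
    by (intro conjI
          small_o_P_ratio[where G = "\<lambda>I a M. elem_sym (\<lambda>i. a i ^ 3) I 2 / M ^ 3"
            and K = "\<lambda>_ _. 0" and N = "\<lambda>e L. L ^ 3 / e\<^sup>2"]
          small_o_P_ratio[where G = "\<lambda>I a M. elem_sym (\<lambda>i. a i ^ 2) I 3 / M ^ 3"
            and K = "\<lambda>e L. L ^ 3 / e" and N = "\<lambda>_ _. 1"]
          small_o_P_ratio[where G = "\<lambda>I a M. elem_sym (\<lambda>i. a i ^ 2) I 2 / M"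
            and K = "\<lambda>e L. L\<^sup>2 / e" and N = "\<lambda>_ _. 1"])
       (assumption | rule elem_sym2_cubes_ratio_le elem_sym3_squares_ratio_le elem_sym2_squares_ratio_le)+
qed

end
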